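(* For every $k\ge3$, the distribution $P_{k\text{-BAL}}$ satisfies SYM, BAL, MIN and UNI.
   Context: $\Omega=\{\pm1\}$, $q=2$, $k\ge3$. Let $\lambda=\lambda(k)\in(0,1)$ be the unique root in $(0,1)$ of $(1-\lambda)(1+\lambda)^{k-1}-1=0$. For $\tau\in\Omega^k$ let $\psi_\tau(\sigma)=\lambda^{\sum_{j=1}^k\mathbf 1\{\sigma_j=\tau_j\}}\big(1-\prod_{i=1}^k\mathbf 1\{\sigma_i=-\tau_i\}\big)$, and let $P_{k\text{-BAL}}$ be the uniform distribution on these $2^k$ functions. $\boldsymbol\psi$ denotes a sample from $P=P_{k\text{-BAL}}$, $\xi=q^{-k}\sum_{\sigma\in\Omega^k}\mathbb E[\boldsymbol\psi(\sigma)]$, $\psi^\theta(\sigma)=\psi(\sigma_{\theta(1)},\dots,\sigma_{\theta(k)})$. SYM: for all $i\in[k]$, $\omega\in\Omega$, $\psi$ in the support, $\sum_{\tau\in\Omega^k}\mathbf 1\{\tau_i=\omega\}\psi(\tau)=q^{k-1}\xi$, and $P(\psi)=P(\psi^\theta)$ for every permutation $\theta$. BAL: $\phi(\mu)=\sum_{\tau\in\Omega^k}\mathbb E[\boldsymbol\psi(\tau)]\prod_{i=1}^k\mu(\tau_i)$ is concave on distributions $\mu$ on $\Omega$ and maximised at the uniform distribution. MIN: among distributions $\rho$ on $\Omega\times\Omega$ with both marginals uniform, $\varphi(\rho)=\sum_{\sigma,\tau\in\Omega^k}\mathbb E[\boldsymbol\psi(\sigma)\boldsymbol\psi(\tau)]\prod_{i=1}^k\rho(\sigma_i,\tau_i)$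 has the uniform distribution as unique global minimiser. UNI: every CSP with constraint functions from the support of $P$ (constraint $a$ on a $k$-tuple $\partial a$ of variables) in which each constraint has pairwise distinct variables and whose bipartite variable–constraint graph is unicyclic admits $\sigma$ with $\prod_a\psi_a(\sigma(\partial a))>0$. *)

theory Defs
  imports "HOL-Probability.Probability" "HOL-Combinatorics.Permutations"
begin

text \<open>Omega = {+1,-1} is encoded as bool (True = +1, False = -1, so -x is Not x); q = 2.
  Elements of Omega^k are bool lists of length k (index j < k stands for j+1).
  Constraint functions are maps bool list => real; only their values on lists of
  length k matter.\<close>

definition cube :: "nat \<Rightarrow> bool list set" where
  "cube k = {xs. length xs = k}"

definition lam :: "nat \<Rightarrow> real" where
  "lam k = (THE l. 0 < l \<and> l < 1 \<and> (1 - l) * (1 + l) ^ (k - 1) - 1 = 0)"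

definition psi_bal :: "nat \<Rightarrow> bool list \<Rightarrow> bool list \<Rightarrow> real" where
  "psi_bal k \<tau> \<sigma> =
     (if length \<sigma> = k then
        lam k ^ card {j. j < k \<and> \<sigma> ! j = \<tau> ! j}
        * (1 - (\<Prod>i<k. if \<sigma> ! i = (\<not> \<tau> ! i) then 1 else 0))
      else 0)"

definition P_kBAL :: "nat \<Rightarrow> (bool list \<Rightarrow> real) pmf" where
  "P_kBAL k = map_pmf (psi_bal k) (pmf_of_set (cube k))"

definition Epsi :: "(bool list \<Rightarrow> real) pmf \<Rightarrow> bool list \<Rightarrow> real" where
  "Epsi P \<sigma> = measure_pmf.expectation P (\<lambda>\<psi>. \<psi> \<sigma>)"

definition xi :: "(bool list \<Rightarrow> real) pmf \<Rightarrow> nat \<Rightarrow> real" where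
  "xi P k = (1 / 2 ^ k) * (\<Sum>\<sigma>\<in>cube k. Epsi P \<sigma>)"

definition perm_fun :: "nat \<Rightarrow> (nat \<Rightarrow> nat) \<Rightarrow> (bool list \<Rightarrow> real) \<Rightarrow> bool list \<Rightarrow> real" where
  "perm_fun k \<theta> \<psi> \<sigma> =
     (if length \<sigma> = k then \<psi> (map (\<lambda>i. \<sigma> ! \<theta> i) [0..<k]) else \<psi> \<sigma>)"

definition SYM :: "(bool list \<Rightarrow> real) pmf \<Rightarrow> nat \<Rightarrow> bool" where
  "SYM P k \<longleftrightarrow>
     (\<forall>i<k. \<forall>\<omega>::bool. \<forall>\<psi>\<in>set_pmf P.
        (\<Sum>\<tau>\<in>cube k. (if \<tau> ! i = \<omega> then 1 else 0) * \<psi> \<tau>) = 2 ^ (k - 1) * xi P k)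
   \<and> (\<forall>\<theta>. \<theta> permutes {..<k} \<longrightarrow> (\<forall>\<psi>. pmf P \<psi> = pmf P (perm_fun k \<theta> \<psi>)))"

definition is_distr :: "('a::finite \<Rightarrow> real) \<Rightarrow> bool" where
  "is_distr \<mu> \<longleftrightarrow> (\<forall>x. 0 \<le> \<mu> x) \<and> (\<Sum>x\<in>UNIV. \<mu> x) = 1"

definition phi_BAL :: "(bool list \<Rightarrow> real) pmf \<Rightarrow> nat \<Rightarrow> (bool \<Rightarrow> real) \<Rightarrow> real" where
  "phi_BAL P k \<mu> = (\<Sum>\<tau>\<in>cube k. Epsi P \<tau> * (\<Prod>i<k. \<mu> (\<tau> ! i)))"

definition BAL :: "(bool list \<Rightarrow> real) pmf \<Rightarrow> nat \<Rightarrow> bool" where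
  "BAL P k \<longleftrightarrow>
     (\<forall>\<mu>1 \<mu>2 u. is_distr \<mu>1 \<and> is_distr \<mu>2 \<and> 0 \<le> u \<and> u \<le> 1 \<longrightarrow>
        u * phi_BAL P k \<mu>1 + (1 - u) * phi_BAL P k \<mu>2
          \<le> phi_BAL P k (\<lambda>x. u * \<mu>1 x + (1 - u) * \<mu>2 x))
   \<and> (\<forall>\<mu>. is_distr \<mu> \<longrightarrow> phi_BAL P k \<mu> \<le> phi_BAL P k (\<lambda>_. 1 / 2))"

definition phi_MIN :: "(bool list \<Rightarrow> real) pmf \<Rightarrow> nat \<Rightarrow> (bool \<times> bool \<Rightarrow> real) \<Rightarrow> real" where
  "phi_MIN P k \<rho> = (\<Sum>\<sigma>\<in>cube k. \<Sum>\<tau>\<in>cube k.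
      measure_pmf.expectation P (\<lambda>\<psi>. \<psi> \<sigma> * \<psi> \<tau>) * (\<Prod>i<k. \<rho> (\<sigma> ! i, \<tau> ! i)))"

definition uniform_marginals :: "(bool \<times> bool \<Rightarrow> real) \<Rightarrow> bool" where
  "uniform_marginals \<rho> \<longleftrightarrow> is_distr \<rho> \<and>
     (\<forall>a. (\<Sum>b\<in>UNIV. \<rho> (a, b)) = 1 / 2) \<and> (\<forall>b. (\<Sum>a\<in>UNIV. \<rho> (a, b)) = 1 / 2)"

definition MIN_prop :: "(bool list \<Rightarrow> real) pmf \<Rightarrow> nat \<Rightarrow> bool" where
  "MIN_prop P k \<longleftrightarrow> uniform_marginals (\<lambda>_. 1 / 4) \<and>
     (\<forall>\<rho>. uniform_marginals \<rho> \<and> \<rho> \<noteq> (\<lambda>_. 1 / 4) \<longrightarrow>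
        phi_MIN P k (\<lambda>_. 1 / 4) < phi_MIN P k \<rho>)"

text \<open>Simple undirected graphs: vertex set W, edge set E of 2-element subsets.\<close>
definition connected_graph :: "'a set \<Rightarrow> 'a set set \<Rightarrow> bool" where
  "connected_graph W E \<longleftrightarrow>
     (\<forall>u\<in>W. \<forall>v\<in>W. (u, v) \<in> {(x, y). {x, y} \<in> E}\<^sup>*)"

definition is_cycle :: "'a set set \<Rightarrow> 'a set set \<Rightarrow> bool" where
  "is_cycle E C \<longleftrightarrow> C \<subseteq> E \<and> C \<noteq> {} \<and>
     (\<forall>v\<in>\<Union>C. card {e\<in>C. v \<in> e} = 2) \<and> connected_graph (\<Union>C) C"

definition unicyclic :: "'a set \<Rightarrow> 'a set set \<Rightarrow> bool" where
  "unicyclic W E \<longleftrightarrow> connected_graph W E \<and> (\<exists>!C. is_cycle E C)"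

definition fg_vertices :: "nat set \<Rightarrow> nat set \<Rightarrow> (nat + nat) set" where
  "fg_vertices V A = Inl ` V \<union> Inr ` A"

definition fg_edges :: "nat set \<Rightarrow> (nat \<Rightarrow> nat list) \<Rightarrow> (nat + nat) set set" where
  "fg_edges A dv = {{Inl x, Inr a} | x a. a \<in> A \<and> x \<in> set (dv a)}"

definition UNI :: "(bool list \<Rightarrow> real) pmf \<Rightarrow> nat \<Rightarrow> bool" where
  "UNI P k \<longleftrightarrow>
     (\<forall>(V::nat set) (A::nat set) (dv::nat \<Rightarrow> nat list) (ps::nat \<Rightarrow> bool list \<Rightarrow> real).
        finite V \<and> finite A \<and>
        (\<forall>a\<in>A. length (dv a) = k \<and> distinct (dv a) \<and> set (dv a) \<subseteq> V \<and> ps a \<in> set_pmf P) \<and>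
        unicyclic (fg_vertices V A) (fg_edges A dv)
        \<longrightarrow> (\<exists>\<sigma>::nat \<Rightarrow> bool. 0 < (\<Prod>a\<in>A. ps a (map \<sigma> (dv a)))))"

end

theory Submission
  imports Defs
begin

text \<open>Each \<open>\<psi>\<^sub>\<tau>\<close> depends only on the pattern of agreement with \<open>\<tau>\<close> and vanishes only at the
  antipode of \<open>\<tau>\<close>, so sums over \<open>\<Omega>\<^sup>k\<close> factorise coordinatewise. Hence \<open>E[\<psi>(\<sigma>)]\<close> is
  constant, which gives SYM (via the equation defining \<open>\<lambda>\<close>) and makes \<open>\<phi>\<close> constant on
  distributions. A coupling \<open>\<rho>\<close> with uniform marginals is determined by \<open>a = \<rho>(+,+)\<close>, and
  \<open>\<phi>(\<rho>)\<close> is an explicit polynomial in \<open>x = 4a - 1\<close>: the equation for \<open>\<lambda>\<close> kills its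
  linear term and the bound \<open>\<lambda> > (k - 1)/(k + 1)\<close> makes the quadratic remainder positive.
  For UNI, a constraint owning a variable shared with no other constraint can be satisfied
  last; if there is none, every vertex of the factor graph has degree at least two and every
  constraint vertex degree \<open>k \<ge> 3\<close>, which forces two distinct cycles.\<close>

section \<open>Sums over \<open>\<Omega>\<^sup>k\<close>\<close>

lemma cube_Suc: "cube (Suc k) = (\<lambda>(x, xs). x # xs) ` (UNIV \<times> cube k)"
  unfolding cube_def by (auto simp: image_iff length_Suc_conv)

lemma finite_cube [simp]: "finite (cube k)"
  using finite_lists_length_eq[of "UNIV :: bool set" k] by (simp add: cube_def)

lemma card_cube: "card (cube k) = 2 ^ k"
  using card_lists_length_eq[of "UNIV :: bool set" k] by (simp add: cube_def)

lemma cube_nonempty [simp]: "cube k \<noteq> {}"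
  unfolding cube_def by (auto intro: exI[of _ "replicate k True"])

lemma sum_cube_prod:
  "(\<Sum>\<sigma>\<in>cube k. \<Prod>i<k. f i (\<sigma> ! i)) = (\<Prod>i<k. f i True + f i False :: 'a :: comm_semiring_1)"
proof (induction k arbitrary: f)
  case 0
  then show ?case by (simp add: cube_def)
next
  case (Suc k)
  have inj: "inj_on (\<lambda>(x, xs). x # xs) (UNIV \<times> cube k)"
    by (auto simp: inj_on_def)
  have "(\<Sum>\<sigma>\<in>cube (Suc k). \<Prod>i<Suc k. f i (\<sigma> ! i))
      = (\<Sum>x\<in>UNIV. \<Sum>xs\<in>cube k. f 0 x * (\<Prod>i<k. f (Suc i) (xs ! i)))"
    unfolding cube_Suc sum.reindex[OF inj]
    by (simp add: sum.cartesian_product prod.lessThan_Suc_shift case_prod_beta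
        del: prod.lessThan_Suc)
  also have "\<dots> = (\<Sum>x\<in>UNIV. f 0 x * (\<Prod>i<k. f (Suc i) True + f (Suc i) False))"
    by (simp add: sum_distrib_left[symmetric] Suc.IH[of "\<lambda>i. f (Suc i)"])
  also have "\<dots> = (\<Prod>i<Suc k. f i True + f i False)"
    by (simp add: prod.lessThan_Suc_shift UNIV_bool algebra_simps del: prod.lessThan_Suc)
  finally show ?case .
qed

lemma sum_cube_cube_prod:
  "(\<Sum>\<sigma>\<in>cube k. \<Sum>\<tau>\<in>cube k. \<Prod>i<k. f i (\<sigma> ! i) (\<tau> ! i))
    = (\<Prod>i<k. f i True True + f i True False + f i False True + f i False False :: 'a :: comm_semiring_1)"
proof -
  have "(\<Sum>\<sigma>\<in>cube k. \<Sum>\<tau>\<in>cube k. \<Prod>i<k. f i (\<sigma> ! i) (\<tau> ! i))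
      = (\<Sum>\<sigma>\<in>cube k. \<Prod>i<k. f i (\<sigma> ! i) True + f i (\<sigma> ! i) False)"
    by (rule sum.cong[OF refl]) (rule sum_cube_prod)
  also have "\<dots> = (\<Prod>i<k. f i True True + f i True False + f i False True + f i False False)"
    by (simp add: sum_cube_prod[where f="\<lambda>i b. f i b True + f i b False"] add.assoc)
  finally show ?thesis .
qed

lemma sum_cube_coord_prod:
  assumes "i < k"
  shows "(\<Sum>\<sigma>\<in>cube k. (if \<sigma> ! i = \<omega> then 1 else 0) * (\<Prod>j<k. f j (\<sigma> ! j)))
    = f i \<omega> * (\<Prod>j\<in>{..<k} - {i}. f j True + f j False :: 'a :: comm_semiring_1)"
proof -
  define g where "g j b = (if j = i \<and> b \<noteq> \<omega> then 0 else f j b)" for j b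
  have "(\<Prod>j<k. g j (\<sigma> ! j)) = g i (\<sigma> ! i) * (\<Prod>j\<in>{..<k} - {i}. f j (\<sigma> ! j))" for \<sigma>
    using assms by (simp add: prod.remove g_def)
  moreover have "(\<Prod>j<k. f j (\<sigma> ! j)) = f i (\<sigma> ! i) * (\<Prod>j\<in>{..<k} - {i}. f j (\<sigma> ! j))" for \<sigma>
    using assms by (simp add: prod.remove)
  ultimately have "(if \<sigma> ! i = \<omega> then 1 else 0) * (\<Prod>j<k. f j (\<sigma> ! j)) = (\<Prod>j<k. g j (\<sigma> ! j))"
    for \<sigma>
    by (simp add: g_def)
  then have "(\<Sum>\<sigma>\<in>cube k. (if \<sigma> ! i = \<omega> then 1 else 0) * (\<Prod>j<k. f j (\<sigma> ! j)))
      = (\<Prod>j<k. g j True + g j False)"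
    by (simp add: sum_cube_prod)
  also have "\<dots> = (g i True + g i False) * (\<Prod>j\<in>{..<k} - {i}. g j True + g j False)"
    using assms by (simp add: prod.remove)
  also have "\<dots> = f i \<omega> * (\<Prod>j\<in>{..<k} - {i}. f j True + f j False)"
    by (cases \<omega>) (simp_all add: g_def)
  finally show ?thesis .
qed

section \<open>The constant \<open>\<lambda>\<close>\<close>

definition bal_poly :: "nat \<Rightarrow> real \<Rightarrow> real" where
  "bal_poly k t = (1 - t) * (1 + t) ^ (k - 1) - 1"

lemma bal_poly_has_real_derivative:
  assumes "k \<ge> 2"
  shows "(bal_poly k has_real_derivative (1 + t) ^ (k - 2) * (real k - 2 - real k * t)) (at t)"
proof -
  obtain n where k: "k = n + 2"
    using assms by (metis add.commute le_iff_add)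
  have f: "bal_poly k = (\<lambda>t. (1 - t) * (1 + t) ^ Suc n - 1)"
    by (simp add: k bal_poly_def fun_eq_iff)
  have "((\<lambda>t. (1 + t) ^ Suc n) has_real_derivative (1 + real n) * (1 * (1 + t) ^ n)) (at t)"
    by (rule DERIV_power_Suc) (auto intro!: derivative_eq_intros)
  then have "(bal_poly k has_real_derivative
      (1 - t) * ((1 + real n) * (1 * (1 + t) ^ n)) + (- 1) * (1 + t) ^ Suc n - 0) (at t)"
    unfolding f by (intro DERIV_diff DERIV_mult' DERIV_const) (auto intro!: derivative_eq_intros)
  moreover have "(1 - t) * ((1 + real n) * (1 * (1 + t) ^ n)) + (- 1) * (1 + t) ^ Suc n - 0
      = (1 + t) ^ (k - 2) * (real k - 2 - real k * t)"
    by (simp add: k algebra_simps)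
  ultimately show ?thesis
    by simp
qed

lemma bal_poly_strict_increasing:
  assumes "k \<ge> 2" "0 \<le> a" "a < b" "b \<le> (real k - 2) / real k"
  shows "bal_poly k a < bal_poly k b"
proof (rule DERIV_pos_imp_increasing_open[OF \<open>a < b\<close>])
  fix t assume t: "a < t" "t < b"
  have "real k * t < real k * b"
    using t assms by simp
  also have "\<dots> \<le> real k - 2"
    using assms by (simp add: field_simps)
  finally show "\<exists>y. (bal_poly k has_real_derivative y) (at t) \<and> 0 < y"
    using t assms bal_poly_has_real_derivative[OF assms(1)] by force
next
  show "continuous_on {a..b} (bal_poly k)"
    unfolding bal_poly_def by (auto intro!: continuous_intros)
qed

lemma bal_poly_strict_decreasing:
  assumes "k \<ge> 2" "(real k - 2) / real k \<le> a" "a < b"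
  shows "bal_poly k b < bal_poly k a"
proof (rule DERIV_neg_imp_decreasing_open[OF \<open>a < b\<close>])
  fix t assume t: "a < t" "t < b"
  have "real k - 2 \<le> real k * a"
    using assms by (simp add: field_simps)
  also have "\<dots> < real k * t"
    using t assms by simp
  finally have "real k - 2 - real k * t < 0"
    by simp
  moreover have "0 \<le> (real k - 2) / real k"
    using assms by simp
  then have "0 < (1 + t) ^ (k - 2)"
    using assms t by (intro zero_less_power) linarith
  ultimately have "(1 + t) ^ (k - 2) * (real k - 2 - real k * t) < 0"
    by (rule mult_pos_neg[rotated])
  then show "\<exists>y. (bal_poly k has_real_derivative y) (at t) \<and> y < 0"
    using bal_poly_has_real_derivative[OF assms(1)] by blast
next
  show "continuous_on {a..b} (bal_poly k)"
    unfolding bal_poly_def by (auto intro!: continuous_intros)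
qed

lemma three_halves_power_gt: "(3 / 2 :: real) ^ (n + 2) > (real n + 4) / 2"
proof (induction n)
  case (Suc n)
  have "(3 / 2) * ((real n + 4) / 2) < (3 / 2 :: real) * (3 / 2) ^ (n + 2)"
    using Suc by simp
  then show ?case
    by simp
qed simp

lemma bal_poly_pos:
  assumes "k \<ge> 3"
  shows "bal_poly k ((real k - 1) / (real k + 1)) > 0"
proof -
  obtain n where k: "k = n + 3"
    using assms by (metis add.commute le_iff_add)
  have "(3 / 2 :: real) ^ (n + 2) \<le> (2 * real k / (real k + 1)) ^ (n + 2)"
    using assms by (intro power_mono) (auto simp: field_simps)
  with three_halves_power_gt[of n]
  have "(real k + 1) / 2 < (2 * real k / (real k + 1)) ^ (k - 1)"
    by (simp add: k)
  then have "2 / (real k + 1) * ((real k + 1) / 2)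
      < 2 / (real k + 1) * (2 * real k / (real k + 1)) ^ (k - 1)"
    by (intro mult_strict_left_mono) auto
  moreover have "2 / (real k + 1) * ((real k + 1) / 2) = 1"
    by simp
  ultimately have "1 < 2 / (real k + 1) * (2 * real k / (real k + 1)) ^ (k - 1)"
    by linarith
  moreover have "1 - (real k - 1) / (real k + 1) = 2 / (real k + 1)"
    "1 + (real k - 1) / (real k + 1) = 2 * real k / (real k + 1)"
    by (simp_all add: field_simps)
  ultimately show ?thesis
    unfolding bal_poly_def by simp
qed

text \<open>\<open>bal_poly k\<close> vanishes at 0, increases up to \<open>(k - 2) / k\<close> and decreases afterwards.\<close>
lemma bal_poly_positive_root_unique:
  assumes k: "k \<ge> 2" and roots: "0 < x" "bal_poly k x = 0" "0 < y" "bal_poly k y = 0"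
  shows "x = y"
proof -
  have above_m: "(real k - 2) / real k < z" if "0 < z" "bal_poly k z = 0" for z
  proof (rule ccontr)
    assume "\<not> (real k - 2) / real k < z"
    then have "bal_poly k 0 < bal_poly k z"
      using bal_poly_strict_increasing[OF k, of 0 z] that by simp
    then show False
      using that by (simp add: bal_poly_def)
  qed
  have "(real k - 2) / real k \<le> x" "(real k - 2) / real k \<le> y"
    using above_m roots by (auto intro: less_imp_le)
  then have "\<not> x < y" "\<not> y < x"
    using bal_poly_strict_decreasing[OF k, of x y] bal_poly_strict_decreasing[OF k, of y x] roots
    by auto
  then show ?thesis
    by simp
qed

lemma lam_root:
  assumes "k \<ge> 3"
  shows "0 < lam k" "lam k < 1" "bal_poly k (lam k) = 0" "(real k - 1) / (real k + 1) < lam k"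
proof -
  define l0 where "l0 = (real k - 1) / (real k + 1)"
  have l0: "0 < l0" "l0 < 1"
    using assms by (auto simp: l0_def field_simps)
  have "\<exists>x. l0 \<le> x \<and> x \<le> 1 \<and> bal_poly k x = 0"
    using bal_poly_pos[OF assms] l0
    by (intro IVT2) (auto simp: l0_def bal_poly_def intro!: continuous_intros)
  then obtain x where "l0 \<le> x" "x \<le> 1" "bal_poly k x = 0"
    by blast
  moreover have "bal_poly k 1 = -1"
    by (simp add: bal_poly_def)
  ultimately have x: "l0 < x" "x < 1" "bal_poly k x = 0"
    using bal_poly_pos[OF assms] unfolding l0_def[symmetric] by (auto simp: order.order_iff_strict)
  have "lam k = x"
    unfolding lam_def
    using x l0 bal_poly_positive_root_unique[of k x] assms
    by (intro the_equality) (auto simp: bal_poly_def)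
  then show "0 < lam k" "lam k < 1" "bal_poly k (lam k) = 0" "(real k - 1) / (real k + 1) < lam k"
    using x l0 by (auto simp: l0_def)
qed

section \<open>The constraint functions; SYM and BAL\<close>

lemma prod_if_const_eq_power:
  "(\<Prod>j<k. if P j then x else 1) = (x :: real) ^ card {j. j < (k :: nat) \<and> P j}"
proof -
  have eq: "{..<k} \<inter> Collect P = {j. j < k \<and> P j}"
    by auto
  show ?thesis
    by (simp add: prod.If_cases eq)
qed

lemma prod_indicator:
  "(\<Prod>i<(k :: nat). if Q i then 1 else 0 :: real) = (if \<forall>i<k. Q i then 1 else 0)"
proof (cases "\<forall>i<k. Q i")
  case False
  then obtain i where "i < k" "\<not> Q i"
    by auto
  then have "(\<Prod>i<k. if Q i then 1 else 0 :: real) = 0"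
    by (subst prod_zero_iff) auto
  then show ?thesis
    using False by simp
qed (auto intro: prod.neutral)

lemma psi_bal_eq_prod_diff:
  assumes "length \<sigma> = k"
  shows "psi_bal k \<tau> \<sigma> = (\<Prod>j<k. if \<sigma> ! j = \<tau> ! j then lam k else 1)
    - (\<Prod>j<k. if \<sigma> ! j = (\<not> \<tau> ! j) then 1 else 0)"
proof (cases "\<forall>j<k. \<sigma> ! j = (\<not> \<tau> ! j)")
  case True
  then have "(\<Prod>j<k. if \<sigma> ! j = \<tau> ! j then lam k else 1) = 1"
    by (auto intro!: prod.neutral)
  then show ?thesis
    using True assms by (simp add: psi_bal_def prod_indicator flip: prod_if_const_eq_power)
qed (use assms in \<open>simp add: psi_bal_def prod_indicator flip: prod_if_const_eq_power\<close>)

lemma psi_bal_commute: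
  assumes "length \<sigma> = k" "length \<tau> = k"
  shows "psi_bal k \<tau> \<sigma> = psi_bal k \<sigma> \<tau>"
  unfolding psi_bal_eq_prod_diff[OF assms(1)] psi_bal_eq_prod_diff[OF assms(2)]
  by (intro arg_cong2[where f = "(-)"] prod.cong) auto

lemma psi_bal_pos:
  assumes "k \<ge> 3" "length \<sigma> = k" "i < k" "\<sigma> ! i = \<tau> ! i"
  shows "psi_bal k \<tau> \<sigma> > 0"
proof -
  have zero: "(\<Prod>i<k. if \<sigma> ! i = (\<not> \<tau> ! i) then 1 else 0 :: real) = 0"
    using assms by (subst prod_zero_iff) auto
  show ?thesis
    using assms lam_root(1)[OF assms(1)] unfolding psi_bal_def zero by simp
qed

lemma psi_bal_map_Not: "length \<tau> = k \<Longrightarrow> psi_bal k \<tau> (map Not \<tau>) = 0"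
  by (simp add: psi_bal_eq_prod_diff)

lemma inj_on_psi_bal:
  assumes "k \<ge> 3"
  shows "inj_on (psi_bal k) (cube k)"
proof
  fix \<tau>1 \<tau>2 assume \<tau>: "\<tau>1 \<in> cube k" "\<tau>2 \<in> cube k" and eq: "psi_bal k \<tau>1 = psi_bal k \<tau>2"
  have len: "length \<tau>1 = k" "length \<tau>2 = k"
    using \<tau> by (auto simp: cube_def)
  show "\<tau>1 = \<tau>2"
  proof (rule ccontr)
    assume "\<tau>1 \<noteq> \<tau>2"
    then obtain i where i: "i < k" "\<tau>1 ! i \<noteq> \<tau>2 ! i"
      using len nth_equalityI[of \<tau>1 \<tau>2] by auto
    then have "psi_bal k \<tau>1 (map Not \<tau>2) > 0"
      using len by (intro psi_bal_pos[OF assms, of _ i]) auto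
    then show False
      using eq psi_bal_map_Not[OF len(2)] by simp
  qed
qed

lemma sum_psi_bal_coord:
  assumes "k \<ge> 3" "i < k" "length \<tau> = k"
  shows "(\<Sum>\<sigma>\<in>cube k. (if \<sigma> ! i = \<omega> then 1 else 0) * psi_bal k \<tau> \<sigma>)
    = lam k * (1 + lam k) ^ (k - 1)"
proof -
  define agree where "agree j b = (if b = \<tau> ! j then lam k else 1)" for j b
  define opposite where "opposite j b = (if b = (\<not> \<tau> ! j) then 1 else 0 :: real)" for j b
  have psi: "psi_bal k \<tau> \<sigma> = (\<Prod>j<k. agree j (\<sigma> ! j)) - (\<Prod>j<k. opposite j (\<sigma> ! j))"
    if "\<sigma> \<in> cube k" for \<sigma>
    using that by (simp add: cube_def psi_bal_eq_prod_diff agree_def opposite_def)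
  have card: "card ({..<k} - {i}) = k - 1"
    using assms by simp
  have sums: "agree j True + agree j False = 1 + lam k" "opposite j True + opposite j False = 1" for j
    by (auto simp: agree_def opposite_def)
  have "(\<Sum>\<sigma>\<in>cube k. (if \<sigma> ! i = \<omega> then 1 else 0) * psi_bal k \<tau> \<sigma>)
      = (\<Sum>\<sigma>\<in>cube k. (if \<sigma> ! i = \<omega> then 1 else 0) * (\<Prod>j<k. agree j (\<sigma> ! j)))
      - (\<Sum>\<sigma>\<in>cube k. (if \<sigma> ! i = \<omega> then 1 else 0) * (\<Prod>j<k. opposite j (\<sigma> ! j)))"
    unfolding sum_subtractf[symmetric] right_diff_distrib[symmetric] by (intro sum.cong) (auto simp: psi)
  also have "\<dots> = agree i \<omega> * (1 + lam k) ^ (k - 1) - opposite i \<omega>"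
    unfolding sum_cube_coord_prod[OF assms(2)] sums by (simp add: card)
  also have "\<dots> = lam k * (1 + lam k) ^ (k - 1)"
    using lam_root(3)[OF assms(1)]
    by (auto simp: agree_def opposite_def bal_poly_def algebra_simps)
  finally show ?thesis .
qed

lemma sum_psi_bal:
  assumes "k \<ge> 3" "length \<tau> = k"
  shows "(\<Sum>\<sigma>\<in>cube k. psi_bal k \<tau> \<sigma>) = 2 * lam k * (1 + lam k) ^ (k - 1)"
proof -
  have "(\<Sum>\<sigma>\<in>cube k. psi_bal k \<tau> \<sigma>)
      = (\<Sum>\<sigma>\<in>cube k. (if \<sigma> ! 0 = True then 1 else 0) * psi_bal k \<tau> \<sigma>)
      + (\<Sum>\<sigma>\<in>cube k. (if \<sigma> ! 0 = False then 1 else 0) * psi_bal k \<tau> \<sigma>)"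
    unfolding sum.distrib[symmetric] by (intro sum.cong) auto
  then show ?thesis
    using assms sum_psi_bal_coord[of k 0 \<tau> True] sum_psi_bal_coord[of k 0 \<tau> False] by simp
qed

lemma Epsi_P_kBAL:
  assumes "k \<ge> 3" "length \<sigma> = k"
  shows "Epsi (P_kBAL k) \<sigma> = lam k * (1 + lam k) ^ (k - 1) / 2 ^ (k - 1)"
proof -
  have "Epsi (P_kBAL k) \<sigma> = (\<Sum>\<tau>\<in>cube k. psi_bal k \<tau> \<sigma>) / 2 ^ k"
    unfolding Epsi_def P_kBAL_def by (simp add: integral_pmf_of_set card_cube)
  also have "\<dots> = (\<Sum>\<tau>\<in>cube k. psi_bal k \<sigma> \<tau>) / 2 ^ k"
    using assms by (intro arg_cong2[where f = "(/)"] sum.cong) (auto simp: cube_def psi_bal_commute)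
  also have "\<dots> = lam k * (1 + lam k) ^ (k - 1) / 2 ^ (k - 1)"
    using assms by (simp add: sum_psi_bal power_eq_if)
  finally show ?thesis .
qed

lemma xi_P_kBAL:
  assumes "k \<ge> 3"
  shows "xi (P_kBAL k) k = lam k * (1 + lam k) ^ (k - 1) / 2 ^ (k - 1)"
proof -
  have "(\<Sum>\<sigma>\<in>cube k. Epsi (P_kBAL k) \<sigma>) = 2 ^ k * (lam k * (1 + lam k) ^ (k - 1) / 2 ^ (k - 1))"
    using assms by (simp add: Epsi_P_kBAL cube_def card_cube[unfolded cube_def])
  then show ?thesis
    by (simp add: xi_def)
qed

lemma set_pmf_P_kBAL: "set_pmf (P_kBAL k) = psi_bal k ` cube k"
  by (simp add: P_kBAL_def)

lemma pmf_P_kBAL: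
  assumes "k \<ge> 3"
  shows "pmf (P_kBAL k) \<psi> = (if \<psi> \<in> psi_bal k ` cube k then 1 / 2 ^ k else 0)"
proof (cases "\<psi> \<in> psi_bal k ` cube k")
  case True
  then obtain \<tau> where \<tau>: "\<tau> \<in> cube k" "\<psi> = psi_bal k \<tau>"
    by auto
  have "pmf (P_kBAL k) \<psi> = pmf (pmf_of_set (cube k)) \<tau>"
    unfolding P_kBAL_def \<tau>(2) using inj_on_psi_bal[OF assms] \<tau>(1) by (intro pmf_map_inj) auto
  then show ?thesis
    using True \<tau>(1) by (simp add: card_cube)
qed (simp add: set_pmf_P_kBAL pmf_eq_0_set_pmf)

lemma perm_fun_eq_permute_list:
  "length \<sigma> = k \<Longrightarrow> perm_fun k \<theta> \<psi> \<sigma> = \<psi> (permute_list \<theta> \<sigma>)"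
  by (simp add: perm_fun_def permute_list_def)

lemma permute_list_permute_list_inv:
  assumes "\<theta> permutes {..<length xs}"
  shows "permute_list \<theta> (permute_list (inv \<theta>) xs) = xs"
  using permute_list_compose[OF assms, of "inv \<theta>"] permutes_inv_o(2)[OF assms] by simp

lemma psi_bal_permute_list:
  assumes \<theta>: "\<theta> permutes {..<k}" and len: "length \<sigma> = k" "length \<tau> = k"
  shows "psi_bal k (permute_list \<theta> \<tau>) (permute_list \<theta> \<sigma>) = psi_bal k \<tau> \<sigma>"
proof -
  have prod_permute: "(\<Prod>j<k. g (permute_list \<theta> \<sigma> ! j) (permute_list \<theta> \<tau> ! j))
      = (\<Prod>j<k. g (\<sigma> ! j) (\<tau> ! j))" for g :: "bool \<Rightarrow> bool \<Rightarrow> real"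
  proof -
    have "(\<Prod>j<k. g (permute_list \<theta> \<sigma> ! j) (permute_list \<theta> \<tau> ! j))
        = (\<Prod>j<k. g (\<sigma> ! \<theta> j) (\<tau> ! \<theta> j))"
      using \<theta> len by (intro prod.cong) (simp_all add: permute_list_nth)
    also have "\<dots> = (\<Prod>j<k. g (\<sigma> ! j) (\<tau> ! j))"
      by (rule prod.reindex_bij_betw[OF permutes_imp_bij[OF \<theta>]])
    finally show ?thesis .
  qed
  show ?thesis
    using prod_permute[of "\<lambda>a b. if a = b then lam k else 1"]
      prod_permute[of "\<lambda>a b. if a = (\<not> b) then 1 else 0"]
    by (simp add: psi_bal_eq_prod_diff len)
qed

lemma perm_fun_psi_bal:
  assumes \<theta>: "\<theta> permutes {..<k}" and len: "length \<tau> = k"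
  shows "perm_fun k \<theta> (psi_bal k \<tau>) = psi_bal k (permute_list (inv \<theta>) \<tau>)"
proof
  fix \<sigma> :: "bool list"
  show "perm_fun k \<theta> (psi_bal k \<tau>) \<sigma> = psi_bal k (permute_list (inv \<theta>) \<tau>) \<sigma>"
  proof (cases "length \<sigma> = k")
    case True
    have "perm_fun k \<theta> (psi_bal k \<tau>) \<sigma>
        = psi_bal k (permute_list \<theta> (permute_list (inv \<theta>) \<tau>)) (permute_list \<theta> \<sigma>)"
      using True \<theta> len by (simp add: perm_fun_eq_permute_list permute_list_permute_list_inv)
    also have "\<dots> = psi_bal k (permute_list (inv \<theta>) \<tau>) \<sigma>"
      using True \<theta> len by (intro psi_bal_permute_list) auto
    finally show ?thesis .
  qed (simp add: perm_fun_def psi_bal_def)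
qed

lemma perm_fun_inv_perm_fun:
  assumes "\<theta> permutes {..<k}"
  shows "perm_fun k (inv \<theta>) (perm_fun k \<theta> \<psi>) = \<psi>"
proof
  fix \<sigma> :: "bool list"
  show "perm_fun k (inv \<theta>) (perm_fun k \<theta> \<psi>) \<sigma> = \<psi> \<sigma>"
  proof (cases "length \<sigma> = k")
    case True
    then show ?thesis
      using assms by (simp add: perm_fun_eq_permute_list permute_list_permute_list_inv)
  qed (simp add: perm_fun_def)
qed

lemma perm_fun_image_psi_bal:
  assumes "\<theta> permutes {..<k}" "\<psi> \<in> psi_bal k ` cube k"
  shows "perm_fun k \<theta> \<psi> \<in> psi_bal k ` cube k"
  using assms by (auto simp: cube_def perm_fun_psi_bal)

lemma SYM_P_kBAL:
  assumes "k \<ge> 3"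
  shows "SYM (P_kBAL k) k"
  unfolding SYM_def set_pmf_P_kBAL
proof (intro conjI allI impI ballI)
  fix i \<omega> \<psi> assume i: "i < k" and "\<psi> \<in> psi_bal k ` cube k"
  then obtain \<tau> where "length \<tau> = k" "\<psi> = psi_bal k \<tau>"
    by (auto simp: cube_def)
  then show "(\<Sum>\<tau>\<in>cube k. (if \<tau> ! i = \<omega> then 1 else 0) * \<psi> \<tau>) = 2 ^ (k - 1) * xi (P_kBAL k) k"
    using assms i by (simp add: sum_psi_bal_coord xi_P_kBAL)
next
  fix \<theta> \<psi> assume \<theta>: "\<theta> permutes {..<k}"
  have "\<psi> \<in> psi_bal k ` cube k \<longleftrightarrow> perm_fun k \<theta> \<psi> \<in> psi_bal k ` cube k"
    using perm_fun_image_psi_bal[OF \<theta>] perm_fun_image_psi_bal[OF permutes_inv[OF \<theta>]]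
      perm_fun_inv_perm_fun[OF \<theta>, of \<psi>] by metis
  then show "pmf (P_kBAL k) \<psi> = pmf (P_kBAL k) (perm_fun k \<theta> \<psi>)"
    by (simp add: pmf_P_kBAL[OF assms])
qed

lemma phi_BAL_P_kBAL:
  assumes "k \<ge> 3"
  shows "phi_BAL (P_kBAL k) k \<mu> = xi (P_kBAL k) k * (\<mu> True + \<mu> False) ^ k"
proof -
  have "phi_BAL (P_kBAL k) k \<mu> = (\<Sum>\<tau>\<in>cube k. xi (P_kBAL k) k * (\<Prod>i<k. \<mu> (\<tau> ! i)))"
    unfolding phi_BAL_def using assms by (intro sum.cong) (auto simp: Epsi_P_kBAL xi_P_kBAL cube_def)
  then show ?thesis
    using sum_cube_prod[where f = "\<lambda>i. \<mu>"] by (simp add: sum_distrib_left[symmetric])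
qed

lemma is_distr_bool: "is_distr \<mu> \<Longrightarrow> \<mu> True + \<mu> False = 1"
  by (simp add: is_distr_def UNIV_bool add.commute)

text \<open>\<open>\<phi>\<close> is constant on distributions, which makes both parts of BAL equalities.\<close>
lemma BAL_P_kBAL:
  assumes "k \<ge> 3"
  shows "BAL (P_kBAL k) k"
  unfolding BAL_def phi_BAL_P_kBAL[OF assms]
proof (intro conjI allI impI)
  fix \<mu>1 \<mu>2 :: "bool \<Rightarrow> real" and u :: real
  assume "is_distr \<mu>1 \<and> is_distr \<mu>2 \<and> 0 \<le> u \<and> u \<le> 1"
  then have "\<mu>1 True + \<mu>1 False = 1" "\<mu>2 True + \<mu>2 False = 1"
    by (simp_all add: is_distr_bool)
  moreover have "u * \<mu>1 True + (1 - u) * \<mu>2 True + (u * \<mu>1 False + (1 - u) * \<mu>2 False)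
      = u * (\<mu>1 True + \<mu>1 False) + (1 - u) * (\<mu>2 True + \<mu>2 False)"
    by (simp add: algebra_simps)
  ultimately show "u * (xi (P_kBAL k) k * (\<mu>1 True + \<mu>1 False) ^ k)
      + (1 - u) * (xi (P_kBAL k) k * (\<mu>2 True + \<mu>2 False) ^ k)
    \<le> xi (P_kBAL k) k * (u * \<mu>1 True + (1 - u) * \<mu>2 True + (u * \<mu>1 False + (1 - u) * \<mu>2 False)) ^ k"
    by (simp add: algebra_simps)
qed (simp add: is_distr_bool)

section \<open>MIN\<close>

definition rho_diag :: "real \<Rightarrow> bool \<times> bool \<Rightarrow> real" where
  "rho_diag a = (\<lambda>(x, y). if x = y then a else 1 / 2 - a)"

lemma uniform_marginals_rho_diag:
  assumes "uniform_marginals \<rho>"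
  shows "\<rho> = rho_diag (\<rho> (True, True))" "0 \<le> \<rho> (True, True)" "\<rho> (True, True) \<le> 1 / 2"
proof -
  have m: "\<rho> (True, True) + \<rho> (True, False) = 1 / 2" "\<rho> (False, True) + \<rho> (False, False) = 1 / 2"
    "\<rho> (True, True) + \<rho> (False, True) = 1 / 2" "\<rho> (True, False) + \<rho> (False, False) = 1 / 2"
    using assms unfolding uniform_marginals_def by (auto simp: UNIV_bool add.commute)
  moreover have "\<rho> (True, True) \<ge> 0" "\<rho> (True, False) \<ge> 0"
    using assms unfolding uniform_marginals_def is_distr_def by auto
  ultimately show "0 \<le> \<rho> (True, True)" "\<rho> (True, True) \<le> 1 / 2"
    by auto
  have "\<rho> (x, y) = rho_diag (\<rho> (True, True)) (x, y)" for x y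
    using m unfolding rho_diag_def by (cases x; cases y) auto
  then show "\<rho> = rho_diag (\<rho> (True, True))"
    by (intro ext) (metis surj_pair)
qed

lemma uniform_marginals_quarter: "uniform_marginals (\<lambda>_. 1 / 4)"
  by (simp add: uniform_marginals_def is_distr_def UNIV_bool UNIV_Times_UNIV[symmetric])

lemma rho_diag_quarter: "rho_diag (1 / 4) = (\<lambda>_. 1 / 4)"
  by (auto simp: rho_diag_def)

lemma sum_cube_cube_prod_mult:
  "(\<Sum>\<sigma>\<in>cube k. \<Sum>\<tau>\<in>cube k.
      (\<Prod>j<k. u j (\<sigma> ! j)) * (\<Prod>j<k. v j (\<tau> ! j)) * (\<Prod>j<k. \<rho> (\<sigma> ! j, \<tau> ! j)))
   = (\<Prod>j<k. u j True * v j True * \<rho> (True, True) + u j True * v j False * \<rho> (True, False)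
      + u j False * v j True * \<rho> (False, True) + u j False * v j False * \<rho> (False, False) :: real)"
  using sum_cube_cube_prod[where f = "\<lambda>j b b'. u j b * v j b' * \<rho> (b, b')"]
  by (simp add: prod.distrib)

definition min_poly :: "nat \<Rightarrow> real \<Rightarrow> real" where
  "min_poly k a = (a * (1 - lam k)\<^sup>2 + lam k) ^ k - 2 * (lam k * (1 / 2 - a) + a) ^ k + a ^ k"

lemma sum_psi_bal_psi_bal_rho_diag:
  assumes "length \<tau>\<^sub>0 = k"
  shows "(\<Sum>\<sigma>\<in>cube k. \<Sum>\<tau>\<in>cube k. psi_bal k \<tau>\<^sub>0 \<sigma> * psi_bal k \<tau>\<^sub>0 \<tau> * (\<Prod>j<k. rho_diag a (\<sigma> ! j, \<tau> ! j)))
    = min_poly k a"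
proof -
  define agree where "agree j b = (if b = \<tau>\<^sub>0 ! j then lam k else 1)" for j b
  define opposite where "opposite j b = (if b = (\<not> \<tau>\<^sub>0 ! j) then 1 else 0 :: real)" for j b
  define W where "W \<sigma> \<tau> = (\<Prod>j<k. rho_diag a (\<sigma> ! j, \<tau> ! j))" for \<sigma> \<tau>
  define S where "S u v = (\<Sum>\<sigma>\<in>cube k. \<Sum>\<tau>\<in>cube k. (\<Prod>j<k. u j (\<sigma> ! j)) * (\<Prod>j<k. v j (\<tau> ! j)) * W \<sigma> \<tau>)"
    for u v
  have psi: "psi_bal k \<tau>\<^sub>0 \<sigma> = (\<Prod>j<k. agree j (\<sigma> ! j)) - (\<Prod>j<k. opposite j (\<sigma> ! j))"
    if "\<sigma> \<in> cube k" for \<sigma>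
    using that by (simp add: cube_def psi_bal_eq_prod_diff agree_def opposite_def)
  have "(\<Sum>\<sigma>\<in>cube k. \<Sum>\<tau>\<in>cube k. psi_bal k \<tau>\<^sub>0 \<sigma> * psi_bal k \<tau>\<^sub>0 \<tau> * W \<sigma> \<tau>)
      = S agree agree - S agree opposite - S opposite agree + S opposite opposite"
    unfolding S_def by (simp add: psi algebra_simps sum.distrib sum_subtractf cong: sum.cong)
  also have "S agree agree = (a * (1 - lam k)\<^sup>2 + lam k) ^ k"
    unfolding S_def W_def sum_cube_cube_prod_mult
    by (subst prod.cong[OF refl, where h = "\<lambda>_. a * (1 - lam k)\<^sup>2 + lam k"])
      (auto simp: agree_def rho_diag_def power2_eq_square algebra_simps)
  also have "S agree opposite = (lam k * (1 / 2 - a) + a) ^ k"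
    unfolding S_def W_def sum_cube_cube_prod_mult
    by (subst prod.cong[OF refl, where h = "\<lambda>_. lam k * (1 / 2 - a) + a"])
      (auto simp: agree_def opposite_def rho_diag_def algebra_simps)
  also have "S opposite agree = (lam k * (1 / 2 - a) + a) ^ k"
    unfolding S_def W_def sum_cube_cube_prod_mult
    by (subst prod.cong[OF refl, where h = "\<lambda>_. lam k * (1 / 2 - a) + a"])
      (auto simp: agree_def opposite_def rho_diag_def algebra_simps)
  also have "S opposite opposite = a ^ k"
    unfolding S_def W_def sum_cube_cube_prod_mult
    by (subst prod.cong[OF refl, where h = "\<lambda>_. a"]) (auto simp: opposite_def rho_diag_def)
  finally show ?thesis
    unfolding W_def min_poly_def by simp
qed

lemma expectation_P_kBAL_mult:
  "measure_pmf.expectation (P_kBAL k) (\<lambda>\<psi>. \<psi> \<sigma> * \<psi> \<tau>)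
    = (\<Sum>\<tau>\<^sub>0\<in>cube k. psi_bal k \<tau>\<^sub>0 \<sigma> * psi_bal k \<tau>\<^sub>0 \<tau>) / 2 ^ k"
  unfolding P_kBAL_def by (simp add: integral_pmf_of_set card_cube)

lemma phi_MIN_rho_diag: "phi_MIN (P_kBAL k) k (rho_diag a) = min_poly k a"
proof -
  define W where "W \<sigma> \<tau> = (\<Prod>j<k. rho_diag a (\<sigma> ! j, \<tau> ! j))" for \<sigma> \<tau>
  have "phi_MIN (P_kBAL k) k (rho_diag a)
      = (\<Sum>\<sigma>\<in>cube k. \<Sum>\<tau>\<in>cube k. (\<Sum>\<tau>\<^sub>0\<in>cube k. psi_bal k \<tau>\<^sub>0 \<sigma> * psi_bal k \<tau>\<^sub>0 \<tau>) / 2 ^ k * W \<sigma> \<tau>)"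
    unfolding phi_MIN_def expectation_P_kBAL_mult W_def ..
  also have "\<dots> = (\<Sum>\<sigma>\<in>cube k. \<Sum>\<tau>\<in>cube k. \<Sum>\<tau>\<^sub>0\<in>cube k. psi_bal k \<tau>\<^sub>0 \<sigma> * psi_bal k \<tau>\<^sub>0 \<tau> * W \<sigma> \<tau> / 2 ^ k)"
    by (simp add: sum_divide_distrib sum_distrib_right)
  also have "\<dots> = (\<Sum>\<sigma>\<in>cube k. \<Sum>\<tau>\<^sub>0\<in>cube k. \<Sum>\<tau>\<in>cube k. psi_bal k \<tau>\<^sub>0 \<sigma> * psi_bal k \<tau>\<^sub>0 \<tau> * W \<sigma> \<tau> / 2 ^ k)"
    by (rule sum.cong[OF refl], rule sum.swap)
  also have "\<dots> = (\<Sum>\<tau>\<^sub>0\<in>cube k. \<Sum>\<sigma>\<in>cube k. \<Sum>\<tau>\<in>cube k. psi_bal k \<tau>\<^sub>0 \<sigma> * psi_bal k \<tau>\<^sub>0 \<tau> * W \<sigma> \<tau> / 2 ^ k)"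
    by (rule sum.swap)
  also have "\<dots> = (\<Sum>\<tau>\<^sub>0\<in>cube k. min_poly k a / 2 ^ k)"
  proof (intro sum.cong refl)
    fix \<tau>\<^sub>0 assume "\<tau>\<^sub>0 \<in> cube k"
    then have "length \<tau>\<^sub>0 = k"
      by (simp add: cube_def)
    then show "(\<Sum>\<sigma>\<in>cube k. \<Sum>\<tau>\<in>cube k. psi_bal k \<tau>\<^sub>0 \<sigma> * psi_bal k \<tau>\<^sub>0 \<tau> * W \<sigma> \<tau> / 2 ^ k)
        = min_poly k a / 2 ^ k"
      unfolding W_def
      by (simp add: sum_psi_bal_psi_bal_rho_diag sum_divide_distrib[symmetric])
  qed
  also have "\<dots> = min_poly k a"
    by (simp add: card_cube)
  finally show ?thesis .
qed

primrec binom_rem :: "nat \<Rightarrow> real \<Rightarrow> real" where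
  "binom_rem 0 z = 0"
| "binom_rem (Suc n) z = real n + (1 + z) * binom_rem n z"

lemma power_eq_binom_rem: "(1 + z) ^ n = 1 + real n * z + z\<^sup>2 * binom_rem n z"
  by (induction n) (simp_all add: algebra_simps power2_eq_square)

lemma binom_rem_nonneg: "z \<ge> -1 \<Longrightarrow> binom_rem n z \<ge> 0"
  by (induction n) auto

lemma binom_rem_mono: "-1 \<le> z \<Longrightarrow> z \<le> z' \<Longrightarrow> binom_rem n z \<le> binom_rem n z'"
proof (induction n)
  case (Suc n)
  then have "(1 + z) * binom_rem n z \<le> (1 + z') * binom_rem n z'"
    by (intro mult_mono) (auto intro: binom_rem_nonneg)
  then show ?case
    by simp
qed simp

lemma binom_rem_Suc_ge: "z \<ge> -1 \<Longrightarrow> binom_rem (Suc n) z \<ge> real n"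
  using binom_rem_nonneg[of z n] by simp

lemma binom_rem_0: "binom_rem n 0 = real n * (real n - 1) / 2"
  by (induction n) (simp_all add: algebra_simps)

lemma binom_rem_combination_pos_neg:
  assumes k: "k \<ge> 3" and r: "0 < r" "r * real k \<le> 1" and x: "-1 \<le> x" "x < 0"
  shows "r\<^sup>2 * binom_rem k (r\<^sup>2 * x) - 2 * r * binom_rem k (r * x) + binom_rem k x > 0"
proof -
  obtain n where kn: "k = Suc n"
    using k by (cases k) auto
  have "r * 1 \<le> r * real k"
    using r k by (intro mult_left_mono) auto
  then have r1: "r \<le> 1"
    using r by linarith
  have "r * (-1) \<le> r * x" "r\<^sup>2 * (-1) \<le> r\<^sup>2 * x"
    using r by (intro mult_left_mono[OF x(1)]; simp)+
  moreover have "r\<^sup>2 \<le> 1"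
    using r r1 by (simp add: power_le_one)
  ultimately have rx: "-1 \<le> r * x" "r * x \<le> 0" and r2x: "-1 \<le> r\<^sup>2 * x"
    using r r1 x by (auto simp: mult_nonneg_nonpos)
  have "binom_rem k (r * x) \<le> real k * (real k - 1) / 2"
    using binom_rem_mono[OF rx, of k] binom_rem_0[of k] by linarith
  then have "2 * r * binom_rem k (r * x) \<le> (r * real k) * (real k - 1)"
    using r by (simp add: mult_left_mono)
  also have "\<dots> \<le> real k - 1"
    using r k by (simp add: mult_left_le_one_le)
  finally have "2 * r * binom_rem k (r * x) \<le> real n"
    by (simp add: kn)
  moreover have "r\<^sup>2 * binom_rem k (r\<^sup>2 * x) \<ge> r\<^sup>2 * real n"
    using binom_rem_Suc_ge[OF r2x, of n] by (simp add: kn mult_left_mono)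
  moreover have "binom_rem k x \<ge> real n"
    using binom_rem_Suc_ge[OF x(1)] by (simp add: kn)
  moreover have "r\<^sup>2 * real n > 0"
    using r k kn by simp
  ultimately show ?thesis
    by linarith
qed

lemma binom_rem_combination_pos_pos:
  assumes k: "k \<ge> 2" and r: "0 < r" "r \<le> 1 / 3" and x: "0 < x"
  shows "r\<^sup>2 * binom_rem k (r\<^sup>2 * x) - 2 * r * binom_rem k (r * x) + binom_rem k x > 0"
proof -
  have rx: "0 \<le> r * x" "r * x \<le> x"
    using r x by (simp_all add: mult_left_le_one_le)
  have "binom_rem k (r * x) \<le> binom_rem k x"
    using rx by (intro binom_rem_mono) auto
  moreover have "binom_rem k 0 \<le> binom_rem k (r * x)"
    using rx by (intro binom_rem_mono) auto
  moreover have "binom_rem k 0 > 0"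
    using k by (simp add: binom_rem_0)
  moreover have "2 * r * binom_rem k (r * x) \<le> 2 * (1 / 3) * binom_rem k (r * x)"
    using r calculation by (intro mult_right_mono) auto
  moreover have "0 \<le> r\<^sup>2 * binom_rem k (r\<^sup>2 * x)"
    using x by (simp add: binom_rem_nonneg order_trans[of _ 0])
  ultimately show ?thesis
    by linarith
qed

lemma binom_rem_combination_pos:
  assumes k: "k \<ge> 3" and r: "0 < r" "r * real k \<le> 1" and x: "-1 \<le> x" "x \<noteq> 0"
  shows "r\<^sup>2 * binom_rem k (r\<^sup>2 * x) - 2 * r * binom_rem k (r * x) + binom_rem k x > 0"
proof (cases "x < 0")
  case True
  then show ?thesis
    using binom_rem_combination_pos_neg[OF k r x(1)] by blast
next
  case False
  have "r * 3 \<le> r * real k"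
    using k r by (intro mult_left_mono) auto
  then have "r \<le> 1 / 3"
    using r by linarith
  then show ?thesis
    using False x k r by (intro binom_rem_combination_pos_pos) auto
qed

text \<open>The linear terms cancel because \<open>q r = 1\<close>.\<close>
lemma power_combination_eq:
  assumes "q * r = 1"
  shows "q\<^sup>2 * (1 + r\<^sup>2 * x) ^ k - 2 * q * (1 + r * x) ^ k + (1 + x) ^ k
    = q\<^sup>2 - 2 * q + 1 + x\<^sup>2 * (r\<^sup>2 * binom_rem k (r\<^sup>2 * x) - 2 * r * binom_rem k (r * x) + binom_rem k x)"
  unfolding power_eq_binom_rem using assms by algebra

lemma min_poly_eq:
  assumes "k \<ge> 3"
  defines "p \<equiv> 1 + lam k" and "s \<equiv> 1 - lam k"
  shows "min_poly k a = ((p ^ k)\<^sup>2 * (1 + (s / p)\<^sup>2 * (4 * a - 1)) ^ k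
    - 2 * p ^ k * (1 + (s / p) * (4 * a - 1)) ^ k + (1 + (4 * a - 1)) ^ k) / 4 ^ k"
proof -
  define r where "r = s / p"
  define x where "x = 4 * a - 1"
  have p: "p > 0"
    using lam_root(1)[OF assms(1)] by (simp add: p_def)
  have pr: "p\<^sup>2 * r\<^sup>2 = s\<^sup>2" "p * r = s"
    using p by (simp_all add: r_def field_simps)
  have "p\<^sup>2 * (1 + r\<^sup>2 * x) / 4 = (p\<^sup>2 + s\<^sup>2 * x) / 4"
    using pr by (simp add: algebra_simps)
  also have "\<dots> = a * (1 - lam k)\<^sup>2 + lam k"
    by (simp add: p_def s_def x_def power2_eq_square field_simps)
  finally have quad: "a * (1 - lam k)\<^sup>2 + lam k = p\<^sup>2 * (1 + r\<^sup>2 * x) / 4" ..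
  have "p * (1 + r * x) / 4 = (p + s * x) / 4"
    using pr by (simp add: algebra_simps)
  also have "\<dots> = lam k * (1 / 2 - a) + a"
    by (simp add: p_def s_def x_def field_simps)
  finally have lin: "lam k * (1 / 2 - a) + a = p * (1 + r * x) / 4" ..
  have "min_poly k a = (p\<^sup>2 * (1 + r\<^sup>2 * x) / 4) ^ k - 2 * (p * (1 + r * x) / 4) ^ k + ((1 + x) / 4) ^ k"
    unfolding min_poly_def quad lin by (simp add: x_def)
  also have "\<dots> = ((p ^ k)\<^sup>2 * (1 + r\<^sup>2 * x) ^ k - 2 * p ^ k * (1 + r * x) ^ k + (1 + x) ^ k) / 4 ^ k"
    by (simp add: power_divide power_mult_distrib diff_divide_distrib flip: power_mult)
      (simp add: add_divide_distrib diff_divide_distrib mult.assoc mult.commute)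
  finally show ?thesis
    unfolding r_def x_def .
qed

lemma min_poly_gt_quarter:
  assumes k: "k \<ge> 3" and a: "0 \<le> a" "a \<le> 1 / 2" "a \<noteq> 1 / 4"
  shows "min_poly k (1 / 4) < min_poly k a"
proof -
  define p where "p = 1 + lam k"
  define s where "s = 1 - lam k"
  define r where "r = s / p"
  define q where "q = p ^ k"
  define x where "x = 4 * a - 1"
  have p: "p > 0" and s: "s > 0"
    using lam_root(1,2)[OF k] by (simp_all add: p_def s_def)
  have "q * r = s * p ^ (k - 1)"
    using k p by (simp add: q_def r_def power_eq_if)
  also have "\<dots> = 1"
    using lam_root(3)[OF k] by (simp add: s_def p_def bal_poly_def)
  finally have qr: "q * r = 1" .
  have "real k - 1 < lam k * (real k + 1)"
    using lam_root(4)[OF k] by (simp add: field_simps)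
  then have rk: "r * real k \<le> 1"
    using p by (simp add: r_def s_def p_def field_simps)
  have x: "-1 \<le> x" "x \<noteq> 0"
    using a by (auto simp: x_def)
  have value_a: "min_poly k a
      = (q\<^sup>2 - 2 * q + 1 + x\<^sup>2 * (r\<^sup>2 * binom_rem k (r\<^sup>2 * x) - 2 * r * binom_rem k (r * x)
        + binom_rem k x)) / 4 ^ k"
    using min_poly_eq[OF k, of a] power_combination_eq[OF qr, of x k]
    unfolding q_def r_def x_def p_def s_def by simp
  have value_quarter: "min_poly k (1 / 4) = (q\<^sup>2 - 2 * q + 1) / 4 ^ k"
    using min_poly_eq[OF k, of "1 / 4"] unfolding q_def p_def by simp
  have "x\<^sup>2 * (r\<^sup>2 * binom_rem k (r\<^sup>2 * x) - 2 * r * binom_rem k (r * x) + binom_rem k x) > 0"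
    using binom_rem_combination_pos[OF k _ rk x] p s x(2) by (simp add: r_def)
  then show ?thesis
    unfolding value_a value_quarter by (simp add: divide_strict_right_mono)
qed

lemma MIN_P_kBAL:
  assumes "k \<ge> 3"
  shows "MIN_prop (P_kBAL k) k"
  unfolding MIN_prop_def
proof (intro conjI allI impI uniform_marginals_quarter)
  fix \<rho> :: "bool \<times> bool \<Rightarrow> real"
  assume \<rho>: "uniform_marginals \<rho> \<and> \<rho> \<noteq> (\<lambda>_. 1 / 4)"
  then have diag: "\<rho> = rho_diag (\<rho> (True, True))"
    by (simp add: uniform_marginals_rho_diag)
  have "\<rho> (True, True) \<noteq> 1 / 4"
  proof
    assume "\<rho> (True, True) = 1 / 4"
    then have "\<rho> = (\<lambda>_. 1 / 4)"
      using diag rho_diag_quarter by metis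
    with \<rho> show False
      by simp
  qed
  then have "min_poly k (1 / 4) < min_poly k (\<rho> (True, True))"
    using \<rho> uniform_marginals_rho_diag(2,3) by (intro min_poly_gt_quarter[OF assms]) auto
  moreover have "phi_MIN (P_kBAL k) k \<rho> = min_poly k (\<rho> (True, True))"
    by (subst (1) diag) (rule phi_MIN_rho_diag)
  moreover have "phi_MIN (P_kBAL k) k (\<lambda>_. 1 / 4) = min_poly k (1 / 4)"
    using phi_MIN_rho_diag[of k "1 / 4"] by (simp add: rho_diag_quarter)
  ultimately show "phi_MIN (P_kBAL k) k (\<lambda>_. 1 / 4) < phi_MIN (P_kBAL k) k \<rho>"
    by simp
qed

section \<open>Cycles in graphs\<close>

definition edge_path :: "'v set set \<Rightarrow> 'v list \<Rightarrow> bool" where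
  "edge_path E xs \<longleftrightarrow> (\<forall>i. Suc i < length xs \<longrightarrow> {xs ! i, xs ! Suc i} \<in> E)"

definition cycle_list :: "'v set set \<Rightarrow> 'v list \<Rightarrow> bool" where
  "cycle_list E xs \<longleftrightarrow> distinct xs \<and> 3 \<le> length xs \<and> edge_path E xs \<and> {last xs, hd xs} \<in> E"

definition cycle_edge :: "'v list \<Rightarrow> nat \<Rightarrow> 'v set" where
  "cycle_edge xs j = {xs ! j, xs ! (Suc j mod length xs)}"

definition cycle_edges :: "'v list \<Rightarrow> 'v set set" where
  "cycle_edges xs = cycle_edge xs ` {..<length xs}"

lemma edge_path_snoc:
  assumes "edge_path E xs" "xs \<noteq> []" "{last xs, w} \<in> E"
  shows "edge_path E (xs @ [w])"
  unfolding edge_path_def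
proof (intro allI impI)
  fix i assume i: "Suc i < length (xs @ [w])"
  show "{(xs @ [w]) ! i, (xs @ [w]) ! Suc i} \<in> E"
  proof (cases "Suc i < length xs")
    case True
    then show ?thesis
      using assms(1) by (simp add: edge_path_def nth_append)
  next
    case False
    then have "i = length xs - 1"
      using i by simp
    then show ?thesis
      using assms(2,3) by (simp add: nth_append last_conv_nth)
  qed
qed

lemma edge_path_drop: "edge_path E xs \<Longrightarrow> edge_path E (drop j xs)"
  unfolding edge_path_def by auto

lemma edge_path_mono: "edge_path E xs \<Longrightarrow> E \<subseteq> E' \<Longrightarrow> edge_path E' xs"
  unfolding edge_path_def by auto

lemma set_edge_path_subset:
  assumes "edge_path E xs" "2 \<le> length xs"
  shows "set xs \<subseteq> \<Union>E"
proof
  fix v assume "v \<in> set xs"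
  then obtain i where i: "i < length xs" "v = xs ! i"
    by (auto simp: in_set_conv_nth)
  show "v \<in> \<Union>E"
  proof (cases "Suc i < length xs")
    case True
    then show ?thesis
      using assms(1) i by (auto simp: edge_path_def)
  next
    case False
    then have "Suc (i - 1) < length xs" "Suc (i - 1) = i"
      using i assms(2) by auto
    then have "{xs ! (i - 1), xs ! i} \<in> E"
      using assms(1) unfolding edge_path_def by metis
    then show ?thesis
      using i by blast
  qed
qed

lemma cycle_edges_subset: "cycle_list E xs \<Longrightarrow> cycle_edges xs \<subseteq> E"
proof
  fix e assume xs: "cycle_list E xs" and "e \<in> cycle_edges xs"
  then obtain j where j: "j < length xs" "e = {xs ! j, xs ! (Suc j mod length xs)}"
    by (auto simp: cycle_edges_def cycle_edge_def)
  show "e \<in> E"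
  proof (cases "Suc j < length xs")
    case True
    then show ?thesis
      using xs j by (simp add: cycle_list_def edge_path_def)
  next
    case False
    then have "Suc j = length xs"
      using j by simp
    then have "j = length xs - 1" "Suc j mod length xs = 0" "xs \<noteq> []"
      by auto
    then show ?thesis
      using xs j by (auto simp: cycle_list_def last_conv_nth hd_conv_nth insert_commute)
  qed
qed

lemma Union_cycle_edges:
  assumes "xs \<noteq> []"
  shows "\<Union>(cycle_edges xs) = set xs"
proof
  show "\<Union>(cycle_edges xs) \<subseteq> set xs"
    using assms by (auto simp: cycle_edges_def cycle_edge_def)
  show "set xs \<subseteq> \<Union>(cycle_edges xs)"
    by (auto simp: cycle_edges_def cycle_edge_def in_set_conv_nth)
qed

lemma pred_mod_Suc_mod:
  fixes j n :: nat
  assumes "j < n"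
  shows "(Suc j mod n + n - 1) mod n = j"
proof -
  have "(Suc j mod n + (n - 1)) mod n = (Suc j + (n - 1)) mod n"
    by (simp add: mod_add_left_eq)
  also have "Suc j + (n - 1) = j + n"
    using assms by simp
  finally show ?thesis
    using assms by simp
qed

lemma Suc_mod_pred_mod:
  fixes i n :: nat
  assumes "i < n"
  shows "Suc ((i + n - 1) mod n) mod n = i"
proof -
  have "Suc ((i + n - 1) mod n) mod n = Suc (i + n - 1) mod n"
    by (simp add: mod_Suc_eq)
  also have "Suc (i + n - 1) = i + n"
    using assms by simp
  finally show ?thesis
    using assms by simp
qed

lemma cycle_edges_incident_eq:
  assumes d: "distinct xs" and i: "i < length xs"
  shows "{e \<in> cycle_edges xs. xs ! i \<in> e}
    = {cycle_edge xs i, cycle_edge xs ((i + length xs - 1) mod length xs)}"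
proof (intro equalityI subsetI)
  fix e assume "e \<in> {e \<in> cycle_edges xs. xs ! i \<in> e}"
  then obtain j where j: "j < length xs" "e = cycle_edge xs j" "xs ! i \<in> cycle_edge xs j"
    by (auto simp: cycle_edges_def)
  moreover have "Suc j mod length xs < length xs"
    using j(1) by (intro mod_less_divisor) linarith
  ultimately have "i = j \<or> i = Suc j mod length xs"
    using nth_eq_iff_index_eq[OF d] i by (auto simp: cycle_edge_def)
  then show "e \<in> {cycle_edge xs i, cycle_edge xs ((i + length xs - 1) mod length xs)}"
    using j pred_mod_Suc_mod[OF j(1)] by auto
next
  have "(i + length xs - 1) mod length xs < length xs"
    using i by (intro mod_less_divisor) linarith
  then have "cycle_edge xs i \<in> cycle_edges xs"
    "cycle_edge xs ((i + length xs - 1) mod length xs) \<in> cycle_edges xs"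
    using i by (auto simp: cycle_edges_def)
  moreover have "xs ! i \<in> cycle_edge xs i"
    "xs ! i \<in> cycle_edge xs ((i + length xs - 1) mod length xs)"
    using Suc_mod_pred_mod[OF i] by (auto simp: cycle_edge_def)
  ultimately show "e \<in> {e \<in> cycle_edges xs. xs ! i \<in> e}"
    if "e \<in> {cycle_edge xs i, cycle_edge xs ((i + length xs - 1) mod length xs)}" for e
    using that by auto
qed

lemma cycle_edge_ne_pred:
  assumes d: "distinct xs" and n: "3 \<le> length xs" and i: "i < length xs"
  shows "cycle_edge xs i \<noteq> cycle_edge xs ((i + length xs - 1) mod length xs)"
proof
  define n where "n = length xs"
  define p where "p = (i + n - 1) mod n"
  have nth_eq: "xs ! i' = xs ! j \<longleftrightarrow> i' = j" if "i' < n" "j < n" for i' j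
    using nth_eq_iff_index_eq[OF d] that by (simp add: n_def)
  have "0 < n"
    using n unfolding n_def by linarith
  then have succ: "Suc j mod n < n" for j
    by simp
  have p: "p < n" "Suc p mod n = i"
    using \<open>0 < n\<close> Suc_mod_pred_mod[of i n] i by (simp_all add: p_def n_def)
  assume "cycle_edge xs i = cycle_edge xs ((i + length xs - 1) mod length xs)"
  then have eq: "{xs ! i, xs ! (Suc i mod n)} = {xs ! p, xs ! i}"
    using p by (simp add: cycle_edge_def n_def p_def)
  have "Suc i mod n \<noteq> i mod n"
    using mod_eq_dvd_iff_nat[of i "Suc i" n] n by (auto simp: n_def)
  then have "xs ! (Suc i mod n) = xs ! p"
    using eq nth_eq[OF succ, of i] i by (auto simp: doubleton_eq_iff n_def)
  then have "Suc i mod n = p"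
    using nth_eq[OF succ p(1)] by simp
  moreover have "Suc (Suc i) mod n = Suc (Suc i mod n) mod n"
    by (simp add: mod_Suc_eq)
  ultimately have "Suc (Suc i) mod n = i mod n"
    using p i by (simp add: n_def)
  then have "n dvd 2"
    using mod_eq_dvd_iff_nat[of i "Suc (Suc i)" n] by simp
  then show False
    using n by (auto simp: n_def dest: dvd_imp_le)
qed

lemma card_cycle_edges_incident:
  assumes "distinct xs" "3 \<le> length xs" "v \<in> set xs"
  shows "card {e \<in> cycle_edges xs. v \<in> e} = 2"
proof -
  obtain i where i: "i < length xs" "v = xs ! i"
    using assms(3) by (auto simp: in_set_conv_nth)
  then show ?thesis
    using cycle_edges_incident_eq[OF assms(1) i(1)] cycle_edge_ne_pred[OF assms(1,2) i(1)] by simp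
qed

lemma connected_cycle_edges:
  assumes "xs \<noteq> []"
  shows "connected_graph (set xs) (cycle_edges xs)"
proof -
  define R where "R = {(x, y). {x, y} \<in> cycle_edges xs}"
  have sym_R: "sym (R\<^sup>*)"
    by (rule sym_rtrancl) (auto simp: R_def sym_def insert_commute)
  have reach: "(xs ! 0, xs ! i) \<in> R\<^sup>*" if "i < length xs" for i
    using that
  proof (induction i)
    case (Suc i)
    then have "(xs ! i, xs ! Suc i) \<in> R"
      by (auto simp: R_def cycle_edges_def cycle_edge_def intro!: image_eqI[of _ _ i])
    with Suc show ?case
      by (meson Suc_lessD rtrancl.rtrancl_into_rtrancl)
  qed simp
  show ?thesis
    unfolding connected_graph_def R_def[symmetric]
  proof (intro ballI)
    fix u v assume "u \<in> set xs" "v \<in> set xs"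
    then obtain i j where "i < length xs" "j < length xs" "u = xs ! i" "v = xs ! j"
      by (auto simp: in_set_conv_nth)
    then have "(u, xs ! 0) \<in> R\<^sup>*" "(xs ! 0, v) \<in> R\<^sup>*"
      using reach sym_R by (auto dest: symD)
    then show "(u, v) \<in> R\<^sup>*"
      by (rule rtrancl_trans)
  qed
qed

lemma is_cycle_cycle_edges:
  assumes "cycle_list E xs"
  shows "is_cycle E (cycle_edges xs)"
proof -
  have xs: "distinct xs" "3 \<le> length xs" "xs \<noteq> []"
    using assms by (auto simp: cycle_list_def)
  then have "cycle_edges xs \<noteq> {}"
    by (auto simp: cycle_edges_def cycle_edge_def)
  then show ?thesis
    using cycle_edges_subset[OF assms] card_cycle_edges_incident[OF xs(1,2)]
      connected_cycle_edges[OF xs(3)]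
    by (simp add: is_cycle_def Union_cycle_edges[OF xs(3)])
qed

lemma edge_path_last_edge:
  assumes "edge_path E xs" "2 \<le> length xs"
  shows "{xs ! (length xs - 2), last xs} \<in> E"
proof -
  have "Suc (length xs - 2) < length xs" "Suc (length xs - 2) = length xs - 1" "xs \<noteq> []"
    using assms(2) by auto
  then show ?thesis
    using assms(1) unfolding edge_path_def by (metis last_conv_nth)
qed

lemma exists_longest_path_extension:
  assumes "finite (\<Union>E)" and p: "distinct p" "2 \<le> length p" "edge_path E p" "y \<notin> set p"
  obtains q where "distinct q" "edge_path E q" "\<exists>r. q = p @ r" "y \<notin> set q"
    "\<And>q'. distinct q' \<Longrightarrow> edge_path E q' \<Longrightarrow> \<exists>r. q' = p @ r \<Longrightarrow> y \<notin> set q' \<Longrightarrow> length q' \<le> length q"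
proof -
  define S where "S = {q. distinct q \<and> edge_path E q \<and> (\<exists>r. q = p @ r) \<and> y \<notin> set q}"
  have "S \<subseteq> {xs. set xs \<subseteq> \<Union>E \<and> distinct xs}"
    using set_edge_path_subset p(2) by (fastforce simp: S_def)
  then have "finite S"
    using assms(1) by (rule finite_subset[OF _ finite_subset_distinct])
  moreover have "p \<in> S"
    using p by (auto simp: S_def)
  ultimately have "Max (length ` S) \<in> length ` S"
    by (intro Max_in finite_imageI) auto
  then obtain q where "q \<in> S" and q_max: "length q = Max (length ` S)"
    by (metis imageE)
  moreover have "length q' \<le> length q" if "q' \<in> S" for q'
    unfolding q_max using \<open>finite S\<close> that by simp
  ultimately show ?thesis
    by (intro that[of q]) (auto simp: S_def)
qed

text \<open>The last vertex of a longest path extending \<open>p\<close> and avoiding \<open>y\<close> has a second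
  neighbour, which either is \<open>y\<close>, or closes a cycle, or would extend the path further.\<close>
lemma longest_path_cycle_or_reaches:
  fixes E :: "'v set set"
  assumes fin: "finite (\<Union>E)"
    and deg: "\<And>v u. v \<noteq> y \<Longrightarrow> {v, u} \<in> E \<Longrightarrow> u \<noteq> v \<Longrightarrow> \<exists>w. w \<noteq> u \<and> w \<noteq> v \<and> {v, w} \<in> E"
    and p: "distinct p" "2 \<le> length p" "edge_path E p" "y \<notin> set p"
  shows "(\<exists>c. cycle_list E c) \<or> (\<exists>r. distinct (p @ r @ [y]) \<and> edge_path E (p @ r @ [y]))"
proof -
  obtain q r where q: "distinct q" "edge_path E q" "q = p @ r" "y \<notin> set q"
    and longest: "\<And>q'. distinct q' \<Longrightarrow> edge_path E q' \<Longrightarrow> \<exists>r. q' = p @ r \<Longrightarrow> y \<notin> set q'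
      \<Longrightarrow> length q' \<le> length q"
    using exists_longest_path_extension[OF fin p] by metis
  define n where "n = length q"
  have n: "2 \<le> n" "q \<noteq> []"
    using q(3) p(2) by (auto simp: n_def)
  have "last q = q ! (n - 1)"
    using n by (simp add: n_def last_conv_nth)
  then have "q ! (n - 2) \<noteq> last q" "last q \<noteq> y"
    using q(1,4) n by (auto simp: n_def nth_eq_iff_index_eq)
  then obtain w where w: "w \<noteq> q ! (n - 2)" "w \<noteq> last q" "{last q, w} \<in> E"
    using deg[of "last q" "q ! (n - 2)"] edge_path_last_edge[OF q(2)] n
    by (auto simp: insert_commute n_def)
  have path_w: "edge_path E (q @ [w])"
    using edge_path_snoc[OF q(2) n(2) w(3)] .
  consider "w = y" | "w \<in> set q" | "w \<noteq> y" "w \<notin> set q"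
    by blast
  then show ?thesis
  proof cases
    case 1
    then show ?thesis
      using q path_w by (intro disjI2 exI[of _ r]) simp
  next
    case 2
    then obtain j where j: "j < n" "q ! j = w"
      by (auto simp: in_set_conv_nth n_def)
    have "j \<noteq> n - 1" "j \<noteq> n - 2"
      using j w n by (auto simp: n_def last_conv_nth)
    then have "j + 2 < n"
      using j n by linarith
    then have "cycle_list E (drop j q)"
      using q(1) edge_path_drop[OF q(2)] j w
      by (simp add: cycle_list_def n_def hd_drop_conv_nth insert_commute)
    then show ?thesis
      by blast
  next
    case 3
    then show ?thesis
      using longest[of "q @ [w]"] q path_w by auto
  qed
qed

lemma finite_Union_doubletons:
  assumes "finite E" "\<And>e. e \<in> E \<Longrightarrow> \<exists>u v. u \<noteq> v \<and> e = {u, v}"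
  shows "finite (\<Union>E)"
  using assms by (metis finite.emptyI finite.insertI finite_Union)

lemma exists_cycle_list:
  fixes E :: "'v set set"
  assumes inf: "infinite (UNIV :: 'v set)" and fin: "finite E"
    and two: "\<And>e. e \<in> E \<Longrightarrow> \<exists>u v. u \<noteq> v \<and> e = {u, v}"
    and deg: "\<And>v u. {v, u} \<in> E \<Longrightarrow> u \<noteq> v \<Longrightarrow> \<exists>w. w \<noteq> u \<and> w \<noteq> v \<and> {v, w} \<in> E"
    and "E \<noteq> {}"
  shows "\<exists>c. cycle_list E c"
proof -
  obtain e where "e \<in> E"
    using \<open>E \<noteq> {}\<close> by blast
  then obtain u v where uv: "u \<noteq> v" "{u, v} \<in> E"
    using two by blast
  obtain y where y: "y \<notin> \<Union>E"
    using ex_new_if_finite[OF inf finite_Union_doubletons[OF fin two]] by blast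
  have "y \<notin> set [u, v]"
    using y uv by auto
  then have "(\<exists>c. cycle_list E c) \<or> (\<exists>r. distinct ([u, v] @ r @ [y]) \<and> edge_path E ([u, v] @ r @ [y]))"
    using uv by (intro longest_path_cycle_or_reaches[OF finite_Union_doubletons[OF fin two] deg])
      (auto simp: edge_path_def)
  moreover have "\<not> edge_path E ([u, v] @ r @ [y])" for r
    using set_edge_path_subset[of E "[u, v] @ r @ [y]"] y by auto
  ultimately show ?thesis
    by blast
qed

lemma edge_eq_doubleton:
  assumes "\<And>e. e \<in> E \<Longrightarrow> \<exists>u v. u \<noteq> v \<and> e = {u, v}" "e \<in> E" "a \<in> e"
  obtains y where "y \<noteq> a" "e = {a, y}"
  using assms by (metis doubleton_eq_iff insertE singletonD)

lemma is_cycle_incident_edges: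
  assumes two: "\<And>e. e \<in> E \<Longrightarrow> \<exists>u v. u \<noteq> v \<and> e = {u, v}"
    and C: "is_cycle E C" and a: "a \<in> \<Union>C"
  obtains y1 y2 where "{e \<in> C. a \<in> e} = {{a, y1}, {a, y2}}" "y1 \<noteq> y2" "y1 \<noteq> a" "y2 \<noteq> a"
proof -
  have CE: "C \<subseteq> E"
    using C by (simp add: is_cycle_def)
  have "card {e \<in> C. a \<in> e} = 2"
    using C a unfolding is_cycle_def by blast
  then obtain f1 f2 where f: "{e \<in> C. a \<in> e} = {f1, f2}" "f1 \<noteq> f2"
    by (auto simp: card_2_iff)
  then have "f1 \<in> E" "f2 \<in> E" "a \<in> f1" "a \<in> f2"
    using CE by blast+
  then obtain y1 y2 where "y1 \<noteq> a" "f1 = {a, y1}" "y2 \<noteq> a" "f2 = {a, y2}"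
    using edge_eq_doubleton[OF two] by metis
  with f show ?thesis
    using that by auto
qed

lemma min_degree_two_Diff_edge:
  assumes deg: "\<And>v u. {v, u} \<in> E \<Longrightarrow> u \<noteq> v \<Longrightarrow> \<exists>w. w \<noteq> u \<and> w \<noteq> v \<and> {v, w} \<in> E"
    and a: "{a, y1} \<in> E" "{a, x} \<in> E" "y1 \<noteq> a" "x \<noteq> a" "x \<noteq> y1" "y1 \<noteq> y2" "x \<noteq> y2"
    and v: "v \<noteq> y2" "{v, u} \<in> E - {{a, y2}}" "u \<noteq> v"
  shows "\<exists>w. w \<noteq> u \<and> w \<noteq> v \<and> {v, w} \<in> E - {{a, y2}}"
proof (cases "v = a")
  case True
  then show ?thesis
    using a v by (cases "u = y1") (auto simp: doubleton_eq_iff)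
next
  case False
  obtain w where "w \<noteq> u" "w \<noteq> v" "{v, w} \<in> E"
    using deg[of v u] v by auto
  moreover have "{v, w} \<noteq> {a, y2}"
    using False v by (auto simp: doubleton_eq_iff)
  ultimately show ?thesis
    by auto
qed

text \<open>Deleting the cycle edge \<open>{a, y\<^sub>2}\<close> keeps minimum degree two away from \<open>y\<^sub>2\<close>; a longest
  path starting with the edge \<open>{a, x}\<close> then either closes a cycle avoiding \<open>{a, y\<^sub>2}\<close> or runs
  into \<open>y\<^sub>2\<close>, giving a cycle through \<open>{a, x}\<close>.\<close>
lemma exists_other_cycle:
  fixes E :: "'v set set"
  assumes fin: "finite E" and two: "\<And>e. e \<in> E \<Longrightarrow> \<exists>u v. u \<noteq> v \<and> e = {u, v}"
    and deg: "\<And>v u. {v, u} \<in> E \<Longrightarrow> u \<noteq> v \<Longrightarrow> \<exists>w. w \<noteq> u \<and> w \<noteq> v \<and> {v, w} \<in> E"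
    and C: "is_cycle E C" and a: "a \<in> \<Union>C" and x: "x \<noteq> a" "{a, x} \<in> E" "{a, x} \<notin> C"
  shows "\<exists>C'. is_cycle E C' \<and> C' \<noteq> C"
proof -
  obtain y1 y2 where y: "{e \<in> C. a \<in> e} = {{a, y1}, {a, y2}}" "y1 \<noteq> y2" "y1 \<noteq> a" "y2 \<noteq> a"
    using is_cycle_incident_edges[OF two C a] by blast
  define f2 where "f2 = {a, y2}"
  have CE: "C \<subseteq> E"
    using C by (simp add: is_cycle_def)
  have f1E: "{a, y1} \<in> E" and f2C: "f2 \<in> C"
    using y CE by (auto simp: f2_def)
  have xy: "x \<noteq> y1" "x \<noteq> y2" "y1 \<noteq> y2"
    using x y by auto
  define E' where "E' = E - {f2}"
  have xE': "{a, x} \<in> E'"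
    using y xy x by (auto simp: E'_def f2_def doubleton_eq_iff)
  have degE': "\<exists>w. w \<noteq> u \<and> w \<noteq> v \<and> {v, w} \<in> E'"
    if "v \<noteq> y2" "{v, u} \<in> E'" "u \<noteq> v" for v u
    using min_degree_two_Diff_edge[OF deg f1E x(2) y(3) x(1) xy(1,3,2)] that
    by (simp add: E'_def f2_def)
  have finE': "finite (\<Union>E')"
    using finite_Union_doubletons[OF fin two] by (auto simp: E'_def intro: finite_subset)
  have "y2 \<notin> set [a, x]"
    using y xy by auto
  then have "(\<exists>c. cycle_list E' c) \<or> (\<exists>r. distinct ([a, x] @ r @ [y2]) \<and> edge_path E' ([a, x] @ r @ [y2]))"
    using x xE' by (intro longest_path_cycle_or_reaches[OF finE'] degE') (auto simp: edge_path_def)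
  then show ?thesis
  proof (elim disjE exE conjE)
    fix c assume "cycle_list E' c"
    then have "is_cycle E' (cycle_edges c)"
      by (rule is_cycle_cycle_edges)
    then have "is_cycle E (cycle_edges c)" "f2 \<notin> cycle_edges c"
      by (auto simp: is_cycle_def E'_def)
    then show ?thesis
      using f2C by blast
  next
    fix r assume "distinct ([a, x] @ r @ [y2])" "edge_path E' ([a, x] @ r @ [y2])"
    then have "cycle_list E ([a, x] @ r @ [y2])"
      using f2C CE by (auto simp: cycle_list_def E'_def f2_def insert_commute elim: edge_path_mono)
    moreover have "{a, x} \<in> cycle_edges ([a, x] @ r @ [y2])"
      by (force simp: cycle_edges_def cycle_edge_def intro: image_eqI[of _ _ 0])
    ultimately show ?thesis
      using is_cycle_cycle_edges x(3) by blast
  qed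
qed

lemma two_cycles:
  fixes E :: "'v set set"
  assumes inf: "infinite (UNIV :: 'v set)" and fin: "finite E"
    and two: "\<And>e. e \<in> E \<Longrightarrow> \<exists>u v. u \<noteq> v \<and> e = {u, v}"
    and deg: "\<And>v u. {v, u} \<in> E \<Longrightarrow> u \<noteq> v \<Longrightarrow> \<exists>w. w \<noteq> u \<and> w \<noteq> v \<and> {v, w} \<in> E"
    and deg3: "\<And>e. e \<in> E \<Longrightarrow> \<exists>a\<in>e. 3 \<le> card {f \<in> E. a \<in> f}"
    and "E \<noteq> {}"
  shows "\<exists>C1 C2. is_cycle E C1 \<and> is_cycle E C2 \<and> C1 \<noteq> C2"
proof -
  obtain c where "cycle_list E c"
    using exists_cycle_list[OF inf fin two deg \<open>E \<noteq> {}\<close>] by blast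
  then have C: "is_cycle E (cycle_edges c)" (is "is_cycle E ?C")
    by (rule is_cycle_cycle_edges)
  then obtain e where "e \<in> ?C" "e \<in> E"
    by (auto simp: is_cycle_def)
  then obtain a where a: "a \<in> e" "3 \<le> card {f \<in> E. a \<in> f}"
    using deg3 by blast
  have "card {f \<in> ?C. a \<in> f} = 2"
    using C a \<open>e \<in> ?C\<close> unfolding is_cycle_def by blast
  moreover have "finite {f \<in> ?C. a \<in> f}"
    using C fin by (auto simp: is_cycle_def intro: finite_subset)
  ultimately have "\<not> {f \<in> E. a \<in> f} \<subseteq> {f \<in> ?C. a \<in> f}"
    using a card_mono[of "{f \<in> ?C. a \<in> f}" "{f \<in> E. a \<in> f}"] by linarith
  then obtain f where f: "f \<in> E" "a \<in> f" "f \<notin> ?C"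
    by blast
  then obtain x where "x \<noteq> a" "f = {a, x}"
    using edge_eq_doubleton[OF two] by blast
  then show ?thesis
    using exists_other_cycle[OF fin two deg C, of a x] f C a \<open>e \<in> ?C\<close> by blast
qed

section \<open>UNI\<close>

lemma fg_edges_mono: "A' \<subseteq> A \<Longrightarrow> fg_edges A' dv \<subseteq> fg_edges A dv"
  unfolding fg_edges_def by blast

lemma fg_edges_eq_UN: "fg_edges A dv = (\<Union>a\<in>A. (\<lambda>x. {Inl x, Inr a}) ` set (dv a))"
  unfolding fg_edges_def by blast

lemma fg_edges_min_degree_two:
  assumes dv: "\<forall>a\<in>A. distinct (dv a) \<and> 2 \<le> length (dv a)"
    and shared: "\<forall>a\<in>A. \<forall>x\<in>set (dv a). \<exists>b\<in>A. b \<noteq> a \<and> x \<in> set (dv b)"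
    and vu: "{v, u} \<in> fg_edges A dv" "u \<noteq> v"
  shows "\<exists>w. w \<noteq> u \<and> w \<noteq> v \<and> {v, w} \<in> fg_edges A dv"
proof -
  obtain x a where a: "a \<in> A" "x \<in> set (dv a)" and "{v, u} = {Inl x, Inr a}"
    using vu by (auto simp: fg_edges_def)
  then consider "v = Inl x" "u = Inr a" | "v = Inr a" "u = Inl x"
    by (auto simp: doubleton_eq_iff)
  then show ?thesis
  proof cases
    case 1
    obtain b where "b \<in> A" "b \<noteq> a" "x \<in> set (dv b)"
      using shared a by blast
    then show ?thesis
      using 1 by (intro exI[of _ "Inr b"]) (auto simp: fg_edges_def)
  next
    case 2
    have "card (set (dv a)) \<ge> 2"
      using dv a by (simp add: distinct_card)
    then have "\<not> set (dv a) \<subseteq> {x}"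
      using card_mono[of "{x}" "set (dv a)"] by auto
    then obtain x' where "x' \<in> set (dv a)" "x' \<noteq> x"
      by blast
    then show ?thesis
      using 2 a by (intro exI[of _ "Inl x'"]) (auto simp: fg_edges_def)
  qed
qed

lemma card_fg_edges_incident_constraint:
  assumes "finite A" "a \<in> A" "distinct (dv a)"
  shows "length (dv a) \<le> card {f \<in> fg_edges A dv. Inr a \<in> f}"
proof -
  have "(\<lambda>x. {Inl x, Inr a}) ` set (dv a) \<subseteq> {f \<in> fg_edges A dv. Inr a \<in> f}"
    using assms by (auto simp: fg_edges_def)
  then have "card ((\<lambda>x. {Inl x, Inr a}) ` set (dv a)) \<le> card {f \<in> fg_edges A dv. Inr a \<in> f}"
    using assms by (intro card_mono) (auto simp: fg_edges_eq_UN)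
  moreover have "card ((\<lambda>x. {Inl x, Inr a}) ` set (dv a)) = length (dv a)"
    using assms by (subst card_image) (auto simp: inj_on_def doubleton_eq_iff distinct_card)
  ultimately show ?thesis
    by simp
qed

lemma fg_edges_two_cycles:
  assumes fin: "finite A" and "A \<noteq> {}"
    and dv: "\<forall>a\<in>A. distinct (dv a) \<and> 3 \<le> length (dv a)"
    and shared: "\<forall>a\<in>A. \<forall>x\<in>set (dv a). \<exists>b\<in>A. b \<noteq> a \<and> x \<in> set (dv b)"
  shows "\<exists>C1 C2. is_cycle (fg_edges A dv) C1 \<and> is_cycle (fg_edges A dv) C2 \<and> C1 \<noteq> C2"
proof (rule two_cycles)
  show "infinite (UNIV :: (nat + nat) set)"
    by (simp add: finite_Plus_UNIV_iff)
  show "finite (fg_edges A dv)"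
    using fin by (simp add: fg_edges_eq_UN)
  show "\<exists>u v. u \<noteq> v \<and> e = {u, v}" if "e \<in> fg_edges A dv" for e
    using that by (auto simp: fg_edges_def)
  show "\<exists>w. w \<noteq> u \<and> w \<noteq> v \<and> {v, w} \<in> fg_edges A dv"
    if "{v, u} \<in> fg_edges A dv" "u \<noteq> v" for v u
    using dv shared that by (intro fg_edges_min_degree_two) auto
  show "\<exists>v\<in>e. 3 \<le> card {f \<in> fg_edges A dv. v \<in> f}" if e: "e \<in> fg_edges A dv" for e
  proof -
    obtain x a where "a \<in> A" "e = {Inl x, Inr a}"
      using e by (auto simp: fg_edges_def)
    then show ?thesis
      using dv card_fg_edges_incident_constraint[OF fin, of a dv] by force
  qed
  obtain a where "a \<in> A"
    using \<open>A \<noteq> {}\<close> by blast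
  moreover have "dv a ! 0 \<in> set (dv a)"
    using dv calculation by (auto intro!: nth_mem)
  ultimately show "fg_edges A dv \<noteq> {}"
    by (auto simp: fg_edges_def)
qed

lemma agreeing_assignment_update:
  assumes \<sigma>: "\<forall>b\<in>A - {a}. \<exists>j<length (dv b). \<sigma> (dv b ! j) = \<tau> b ! j"
    and i: "i < length (dv a)" and unshared: "\<forall>b\<in>A. b \<noteq> a \<longrightarrow> dv a ! i \<notin> set (dv b)"
  shows "\<forall>b\<in>A. \<exists>j<length (dv b). (\<sigma>(dv a ! i := \<tau> a ! i)) (dv b ! j) = \<tau> b ! j"
proof
  fix b assume b: "b \<in> A"
  show "\<exists>j<length (dv b). (\<sigma>(dv a ! i := \<tau> a ! i)) (dv b ! j) = \<tau> b ! j"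
  proof (cases "b = a")
    case False
    then obtain j where j: "j < length (dv b)" "\<sigma> (dv b ! j) = \<tau> b ! j"
      using \<sigma> b by blast
    moreover have "dv b ! j \<noteq> dv a ! i"
      using unshared b False j(1) nth_mem by metis
    ultimately show ?thesis
      by auto
  qed (use i in auto)
qed

text \<open>Each constraint forbids a single assignment of its variables, so it suffices to agree
  with a prescribed \<open>\<tau> a\<close> in one position. Peel off constraints with a private variable; if
  none has one, the factor graph contains two cycles.\<close>
lemma unicyclic_agreeing_assignment:
  assumes "finite A" and dv: "\<forall>a\<in>A. distinct (dv a) \<and> 3 \<le> length (dv a)"
    and one: "\<forall>C C'. is_cycle (fg_edges A dv) C \<and> is_cycle (fg_edges A dv) C' \<longrightarrow> C = C'"
  shows "\<exists>\<sigma>. \<forall>a\<in>A. \<exists>i<length (dv a). \<sigma> (dv a ! i) = \<tau> a ! i"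
  using assms
proof (induction A rule: finite_remove_induct)
  case (remove A)
  show ?case
  proof (cases "\<exists>a\<in>A. \<exists>i<length (dv a). \<forall>b\<in>A. b \<noteq> a \<longrightarrow> dv a ! i \<notin> set (dv b)")
    case True
    then obtain a i where a: "a \<in> A" "i < length (dv a)" "\<forall>b\<in>A. b \<noteq> a \<longrightarrow> dv a ! i \<notin> set (dv b)"
      by blast
    have "is_cycle (fg_edges A dv) C" if "is_cycle (fg_edges (A - {a}) dv) C" for C
      using that fg_edges_mono[of "A - {a}" A dv] by (auto simp: is_cycle_def)
    then have "\<forall>C C'. is_cycle (fg_edges (A - {a}) dv) C \<and> is_cycle (fg_edges (A - {a}) dv) C' \<longrightarrow> C = C'"
      using remove.prems(2) by blast
    moreover have "\<forall>b\<in>A - {a}. distinct (dv b) \<and> 3 \<le> length (dv b)"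
      using remove.prems(1) by blast
    ultimately obtain \<sigma> where "\<forall>b\<in>A - {a}. \<exists>j<length (dv b). \<sigma> (dv b ! j) = \<tau> b ! j"
      using remove.IH[OF a(1)] by blast
    then show ?thesis
      using agreeing_assignment_update[OF _ a(2,3)] by blast
  next
    case False
    then have "\<forall>a\<in>A. \<forall>x\<in>set (dv a). \<exists>b\<in>A. b \<noteq> a \<and> x \<in> set (dv b)"
      by (metis in_set_conv_nth)
    then obtain C1 C2 where "is_cycle (fg_edges A dv) C1" "is_cycle (fg_edges A dv) C2" "C1 \<noteq> C2"
      using fg_edges_two_cycles[OF remove.hyps(1,2) remove.prems(1)] by blast
    then show ?thesis
      using remove.prems(2) by blast
  qed
qed simp

lemma UNI_P_kBAL:
  assumes k: "k \<ge> 3"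
  shows "UNI (P_kBAL k) k"
  unfolding UNI_def
proof (intro allI impI)
  fix V A :: "nat set" and dv :: "nat \<Rightarrow> nat list" and ps :: "nat \<Rightarrow> bool list \<Rightarrow> real"
  assume h: "finite V \<and> finite A \<and>
    (\<forall>a\<in>A. length (dv a) = k \<and> distinct (dv a) \<and> set (dv a) \<subseteq> V \<and> ps a \<in> set_pmf (P_kBAL k)) \<and>
    unicyclic (fg_vertices V A) (fg_edges A dv)"
  then have "\<forall>a\<in>A. \<exists>t. length t = k \<and> ps a = psi_bal k t"
    by (auto simp: set_pmf_P_kBAL cube_def)
  then obtain \<tau> where \<tau>: "\<forall>a\<in>A. length (\<tau> a) = k \<and> ps a = psi_bal k (\<tau> a)"
    by metis
  obtain \<sigma> where \<sigma>: "\<forall>a\<in>A. \<exists>i<length (dv a). \<sigma> (dv a ! i) = \<tau> a ! i"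
    using unicyclic_agreeing_assignment[of A dv \<tau>] h k unfolding unicyclic_def by auto
  have "0 < ps a (map \<sigma> (dv a))" if "a \<in> A" for a
    using \<sigma> \<tau> h k that psi_bal_pos[OF k, of "map \<sigma> (dv a)"] by fastforce
  then show "\<exists>\<sigma>. 0 < (\<Prod>a\<in>A. ps a (map \<sigma> (dv a)))"
    by (intro exI prod_pos) auto
qed

theorem mainTheorem15:
  fixes k :: nat
  assumes "k \<ge> 3"
  shows "SYM (P_kBAL k) k \<and> BAL (P_kBAL k) k \<and> MIN_prop (P_kBAL k) k \<and> UNI (P_kBAL k) k"
  using SYM_P_kBAL BAL_P_kBAL MIN_P_kBAL UNI_P_kBAL assms by blast

end
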